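(* Let $\mathcal{H}$ be an infinite dimensional complex Hilbert space and let $\phi:\mathcal{B}(\mathcal{H})\to\mathcal{B}(\mathcal{H})$ be a bijective map preserving the Douglas solution in both directions. Then for every $B\in\mathcal{B}(\mathcal{H})$: $\operatorname{ran}B=\mathcal{H}$ if and only if $\operatorname{ran}\phi(B)=\mathcal{H}$.
   Context: $\mathcal{B}(\mathcal{H})$ denotes the algebra of all bounded linear operators on $\mathcal{H}$. For $A,B\in\mathcal{B}(\mathcal{H})$ with $\operatorname{ran}A\subseteq\operatorname{ran}B$, the Douglas solution of $A=BX$ is the unique $D\in\mathcal{B}(\mathcal{H})$ with $BD=A$ and $\operatorname{ran}D\subseteq(\ker B)^\perp$. A map $\phi:\mathcal{B}(\mathcal{H})\to\mathcal{B}(\mathcal{H})$ preserves the Douglas solution in both directions if for all $A,B,X\in\mathcal{B}(\mathcal{H})$: $X$ is the Douglas solution of $A=BX$ if and only if $\phi(X)$ is the Douglas solution of $\phi(A)=\phi(B)Y$. *)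

theory Defs
  imports "HOL-Analysis.Analysis"
begin

class complex_hilbert = real_normed_vector + complete_space +
  fixes scaleC :: "complex \<Rightarrow> 'a \<Rightarrow> 'a"
    and cinner :: "'a \<Rightarrow> 'a \<Rightarrow> complex"
  assumes scaleC_add_right: "scaleC a (x + y) = scaleC a x + scaleC a y"
    and scaleC_add_left: "scaleC (a + b) x = scaleC a x + scaleC b x"
    and scaleC_scaleC: "scaleC a (scaleC b x) = scaleC (a * b) x"
    and scaleC_one: "scaleC 1 x = x"
    and scaleR_scaleC: "scaleR r x = scaleC (complex_of_real r) x"
    and cinner_add_left: "cinner (x + y) z = cinner x z + cinner y z"
    and cinner_scaleC_left: "cinner (scaleC c x) y = cnj c * cinner x y"
    and cinner_commute: "cinner x y = cnj (cinner y x)"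
    and cinner_self_norm: "cinner x x = complex_of_real ((norm x)\<^sup>2)"

definition fin_dim_C :: "'a::complex_hilbert itself \<Rightarrow> bool" where
  "fin_dim_C _ \<longleftrightarrow> (\<exists>S::'a set. finite S \<and> (\<forall>x. \<exists>c. x = (\<Sum>s\<in>S. scaleC (c s) s)))"

definition bounded_op :: "('a::complex_hilbert \<Rightarrow> 'a) \<Rightarrow> bool" where
  "bounded_op T \<longleftrightarrow> (\<forall>x y. T (x + y) = T x + T y) \<and> (\<forall>c x. T (scaleC c x) = scaleC c (T x))
      \<and> (\<exists>K. \<forall>x. norm (T x) \<le> norm x * K)"

definition BH :: "('a::complex_hilbert \<Rightarrow> 'a) set" where
  "BH = {T. bounded_op T}"

definition ker_op :: "('a::complex_hilbert \<Rightarrow> 'a) \<Rightarrow> 'a set" where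
  "ker_op T = {x. T x = 0}"

definition orth_compl :: "'a::complex_hilbert set \<Rightarrow> 'a set" where
  "orth_compl S = {y. \<forall>x\<in>S. cinner x y = 0}"

definition douglas_solution :: "('a::complex_hilbert \<Rightarrow> 'a) \<Rightarrow> ('a \<Rightarrow> 'a) \<Rightarrow> ('a \<Rightarrow> 'a) \<Rightarrow> bool" where
  "douglas_solution A B X \<longleftrightarrow> range A \<subseteq> range B \<and> X \<in> BH \<and> B \<circ> X = A
      \<and> range X \<subseteq> orth_compl (ker_op B)"

definition preserves_douglas_both :: "(('a::complex_hilbert \<Rightarrow> 'a) \<Rightarrow> ('a \<Rightarrow> 'a)) \<Rightarrow> bool" where
  "preserves_douglas_both \<phi> \<longleftrightarrow> (\<forall>A\<in>BH. \<forall>B\<in>BH. \<forall>X\<in>BH.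
      douglas_solution A B X \<longleftrightarrow> douglas_solution (\<phi> A) (\<phi> B) (\<phi> X))"

end

theory Submission
  imports Defs
begin

text \<open>The property of \<open>B\<close> that every \<open>A \<in> B(H)\<close> admits a Douglas solution of \<open>A = B X\<close>
is transported by \<open>\<phi>\<close>, because \<open>\<phi>\<close> is a bijection of \<open>B(H)\<close> preserving Douglas solutions in
both directions. This property characterises surjectivity: taking \<open>A = I\<close> shows that it forces
\<open>ran B = H\<close>; conversely, for surjective \<open>B\<close> the open mapping theorem gives bounded preimages,
and projecting them onto \<open>(ker B)\<^sup>\<bottom>\<close> yields a bounded linear right inverse \<open>R\<close> with range in
\<open>(ker B)\<^sup>\<bottom>\<close>, so that \<open>R A\<close> is the Douglas solution.\<close>

context complex_hilbert
begin

subclass banach ..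

lemma scaleC_zero_right [simp]: "scaleC c 0 = 0"
  using scaleC_add_right[of c 0 0] by simp

end

lemma cinner_add_right: "cinner x (y + z) = cinner x y + cinner x z"
  by (metis cinner_add_left cinner_commute complex_cnj_add)

lemma cinner_scaleC_right: "cinner x (scaleC c y) = c * cinner x y"
  by (metis cinner_commute cinner_scaleC_left complex_cnj_cnj complex_cnj_mult)

lemma cinner_diff_left: "cinner (x - y) z = cinner x z - cinner y z"
  using cinner_add_left[of "x - y" y z] by (simp add: algebra_simps)

lemma cinner_diff_right: "cinner x (y - z) = cinner x y - cinner x z"
  by (metis cinner_commute cinner_diff_left complex_cnj_diff)

lemma cinner_zero_right [simp]: "cinner x 0 = 0"
  using cinner_diff_right[of x 0 0] by simp

lemma power2_norm_diff:
  "(norm (a - b))\<^sup>2 = (norm a)\<^sup>2 + (norm b)\<^sup>2 - 2 * Re (cinner a b)"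
proof -
  have "cinner (a - b) (a - b) = cinner a a - cinner a b - cnj (cinner a b) + cinner b b"
    by (simp add: cinner_diff_left cinner_diff_right cinner_commute[of b a])
  also have "\<dots> = complex_of_real ((norm a)\<^sup>2 + (norm b)\<^sup>2 - 2 * Re (cinner a b))"
    by (simp only: cinner_self_norm complex_diff_cnj) (simp add: complex_eq_iff)
  finally show ?thesis
    by (simp only: cinner_self_norm of_real_eq_iff)
qed

lemma parallelogram_law:
  fixes a b :: "'a::complex_hilbert"
  shows "(norm (a + b))\<^sup>2 + (norm (a - b))\<^sup>2 = 2 * (norm a)\<^sup>2 + 2 * (norm b)\<^sup>2"
proof -
  have "cinner a (- b) = - cinner a b"
    using cinner_diff_right[of a 0 b] by simp
  then show ?thesis
    using power2_norm_diff[of a b] power2_norm_diff[of a "- b"] by simp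
qed

section \<open>Orthogonal projection onto closed subspaces\<close>

definition csubspace :: "'a::complex_hilbert set \<Rightarrow> bool" where
  "csubspace S \<longleftrightarrow> 0 \<in> S \<and> (\<forall>x\<in>S. \<forall>y\<in>S. x + y \<in> S) \<and> (\<forall>c. \<forall>x\<in>S. scaleC c x \<in> S)"

lemma csubspace_imp_convex: "csubspace S \<Longrightarrow> convex S"
  unfolding csubspace_def convex_def by (simp add: scaleR_scaleC)

lemma csubspace_orth_compl: "csubspace (orth_compl S)"
  by (simp add: csubspace_def orth_compl_def cinner_add_right cinner_scaleC_right)

lemma orth_compl_diff: "a \<in> orth_compl S \<Longrightarrow> b \<in> orth_compl S \<Longrightarrow> a - b \<in> orth_compl S"
  by (simp add: orth_compl_def cinner_diff_right)

lemma orth_compl_inter_eq_zero: "v \<in> S \<Longrightarrow> v \<in> orth_compl S \<Longrightarrow> v = 0"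
  by (auto simp: orth_compl_def cinner_self_norm dest!: bspec[of _ _ v])

lemma convex_midpoint_distance_bound:
  fixes S :: "'a::complex_hilbert set"
  assumes "convex S" "a \<in> S" "b \<in> S" and d: "0 \<le> d" "\<And>k. k \<in> S \<Longrightarrow> d \<le> norm (x - k)"
  shows "(norm (a - b))\<^sup>2 \<le> 2 * (norm (x - a))\<^sup>2 + 2 * (norm (x - b))\<^sup>2 - 4 * d\<^sup>2"
proof -
  define m where "m = scaleR (1/2) a + scaleR (1/2) b"
  have "m \<in> S"
    using convexD[OF assms(1-3), of "1/2" "1/2"] by (simp add: m_def)
  have "(x - a) + (x - b) = scaleR 2 (x - m)"
    by (simp add: m_def algebra_simps flip: scaleR_2)
  then have "norm ((x - a) + (x - b)) \<ge> 2 * d"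
    using d(2)[OF \<open>m \<in> S\<close>] by simp
  then have "(norm ((x - a) + (x - b)))\<^sup>2 \<ge> 4 * d\<^sup>2"
    using power_mono[OF _ mult_nonneg_nonneg[of 2 d], of _ 2] d(1) by (simp add: power_mult_distrib)
  moreover have "(x - a) - (x - b) = b - a"
    by simp
  ultimately show ?thesis
    using parallelogram_law[of "x - a" "x - b"] by (simp add: norm_minus_commute)
qed

lemma Cauchy_if_power2_norm_diff_le:
  fixes u :: "nat \<Rightarrow> 'a::real_normed_vector"
  assumes bound: "\<And>m n. (norm (u m - u n))\<^sup>2 \<le> 2 * inverse (Suc m) + 2 * inverse (Suc n)"
  shows "Cauchy u"
proof (rule metric_CauchyI)
  fix e :: real
  assume "0 < e"
  then obtain M where M: "inverse (Suc M) < e\<^sup>2 / 4"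
    using reals_Archimedean[of "e\<^sup>2 / 4"] by auto
  have "dist (u m) (u n) < e" if "M \<le> m" "M \<le> n" for m n
  proof -
    have "inverse (real (Suc m)) \<le> inverse (Suc M)" "inverse (real (Suc n)) \<le> inverse (Suc M)"
      using that by (auto intro!: le_imp_inverse_le)
    then have "(norm (u m - u n))\<^sup>2 < e\<^sup>2"
      using bound[of m n] M by linarith
    then show ?thesis
      using \<open>0 < e\<close> by (simp add: dist_norm power_less_imp_less_base)
  qed
  then show "\<exists>M. \<forall>m\<ge>M. \<forall>n\<ge>M. dist (u m) (u n) < e"
    by blast
qed

lemma closest_point_in_convex_exists:
  fixes S :: "'a::complex_hilbert set"
  assumes "closed S" "convex S" "S \<noteq> {}"
  shows "\<exists>p\<in>S. \<forall>k\<in>S. norm (x - p) \<le> norm (x - k)"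
proof -
  define d where "d = Inf ((\<lambda>k. norm (x - k)) ` S)"
  have d_le: "d \<le> norm (x - k)" if "k \<in> S" for k
    unfolding d_def by (rule cInf_lower) (use that in \<open>auto intro: bdd_belowI[of _ 0]\<close>)
  have d0: "0 \<le> d"
    unfolding d_def using assms(3) by (auto intro: cInf_greatest)
  have "\<exists>k\<in>S. (norm (x - k))\<^sup>2 < d\<^sup>2 + inverse (Suc n)" for n
  proof -
    have "Inf ((\<lambda>k. norm (x - k)) ` S) < sqrt (d\<^sup>2 + inverse (Suc n))"
      by (rule real_less_rsqrt) (simp add: d_def)
    then obtain k where k: "k \<in> S" "norm (x - k) < sqrt (d\<^sup>2 + inverse (Suc n))"
      using cInf_lessD[of "(\<lambda>k. norm (x - k)) ` S"] assms(3) by blast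
    have "(norm (x - k))\<^sup>2 < (sqrt (d\<^sup>2 + inverse (Suc n)))\<^sup>2"
      using k(2) by (intro power_strict_mono) auto
    then show ?thesis
      using k(1) by auto
  qed
  then obtain kk where kkS: "\<And>n. kk n \<in> S"
    and kk: "\<And>n. (norm (x - kk n))\<^sup>2 < d\<^sup>2 + inverse (Suc n)"
    by metis
  have bound: "(norm (kk m - kk n))\<^sup>2 \<le> 2 * inverse (Suc m) + 2 * inverse (Suc n)" for m n
    using convex_midpoint_distance_bound[OF assms(2) kkS[of m] kkS[of n] d0 d_le] kk[of m] kk[of n]
    by linarith
  have "Cauchy kk"
    using bound by (rule Cauchy_if_power2_norm_diff_le)
  then obtain p where lim: "kk \<longlonglongrightarrow> p"
    using Cauchy_convergent_iff convergent_def by blast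
  have "p \<in> S"
    using closed_sequentially[OF assms(1) kkS lim] .
  have "(norm (x - p))\<^sup>2 \<le> d\<^sup>2"
  proof (rule LIMSEQ_le)
    show "(\<lambda>n. (norm (x - kk n))\<^sup>2) \<longlonglongrightarrow> (norm (x - p))\<^sup>2"
      by (intro tendsto_intros lim)
    show "(\<lambda>n. d\<^sup>2 + inverse (Suc n)) \<longlonglongrightarrow> d\<^sup>2"
      using tendsto_add[OF tendsto_const LIMSEQ_inverse_real_of_nat] by simp
    show "\<exists>N. \<forall>n\<ge>N. (norm (x - kk n))\<^sup>2 \<le> d\<^sup>2 + inverse (Suc n)"
      using kk less_imp_le by blast
  qed
  then have "norm (x - p) \<le> d"
    using d0 by (simp add: power2_le_iff_abs_le)
  then show ?thesis
    using \<open>p \<in> S\<close> d_le by (meson order_trans)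
qed

lemma quadratic_nonneg_imp_linear_coeff_zero:
  fixes c N :: real
  assumes N: "0 \<le> N" and nonneg: "\<And>s. 0 \<le> s\<^sup>2 * N - 2 * s * c"
  shows "c = 0"
proof -
  define s where "s = c / (N + 1)"
  have c: "c = s * (N + 1)"
    using N by (simp add: s_def)
  have "0 \<le> s\<^sup>2 * N - 2 * s * c"
    by (rule nonneg)
  also have "\<dots> = - s\<^sup>2 * (N + 2)"
    by (simp add: c power2_eq_square algebra_simps)
  finally have "s\<^sup>2 \<le> 0"
    using N by (simp add: mult_le_0_iff)
  then show ?thesis
    by (simp add: c)
qed

lemma minimal_norm_imp_in_orth_compl:
  fixes K :: "'a::complex_hilbert set"
  assumes "csubspace K" and min: "\<And>k. k \<in> K \<Longrightarrow> norm z \<le> norm (z - k)"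
  shows "z \<in> orth_compl K"
proof -
  have Re_zero: "Re (cinner z k) = 0" if "k \<in> K" for k
  proof (rule quadratic_nonneg_imp_linear_coeff_zero[of "(norm k)\<^sup>2"])
    fix s :: real
    have "scaleC (complex_of_real s) k \<in> K"
      using assms(1) that by (simp add: csubspace_def)
    then have "(norm z)\<^sup>2 \<le> (norm (z - scaleR s k))\<^sup>2"
      using min by (simp add: scaleR_scaleC power_mono)
    moreover have "cinner z (scaleR s k) = complex_of_real s * cinner z k"
      by (simp add: scaleR_scaleC cinner_scaleC_right)
    ultimately show "0 \<le> s\<^sup>2 * (norm k)\<^sup>2 - 2 * s * Re (cinner z k)"
      by (simp add: power2_norm_diff power_mult_distrib)
  qed simp
  show ?thesis
    unfolding orth_compl_def
  proof (intro CollectI ballI)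
    fix k
    assume "k \<in> K"
    then have "scaleC \<i> k \<in> K"
      using assms(1) by (simp add: csubspace_def)
    then have "Re (cinner z k) = 0" "Im (cinner z k) = 0"
      using Re_zero[of "scaleC \<i> k"] Re_zero[OF \<open>k \<in> K\<close>] by (simp_all add: cinner_scaleC_right)
    then show "cinner k z = 0"
      by (simp add: cinner_commute[of k z] complex_eq_iff)
  qed
qed

lemma orthogonal_decomposition:
  fixes K :: "'a::complex_hilbert set"
  assumes "closed K" "csubspace K"
  shows "\<exists>p\<in>K. x - p \<in> orth_compl K \<and> norm (x - p) \<le> norm x"
proof -
  have "0 \<in> K"
    using assms(2) by (simp add: csubspace_def)
  then obtain p where "p \<in> K" and p: "\<And>k. k \<in> K \<Longrightarrow> norm (x - p) \<le> norm (x - k)"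
    using closest_point_in_convex_exists[OF assms(1) csubspace_imp_convex[OF assms(2)]] by blast
  have "x - p \<in> orth_compl K"
  proof (rule minimal_norm_imp_in_orth_compl[OF assms(2)])
    fix k
    assume "k \<in> K"
    then have "p + k \<in> K"
      using \<open>p \<in> K\<close> assms(2) by (simp add: csubspace_def)
    then show "norm (x - p) \<le> norm (x - p - k)"
      using p by (simp add: algebra_simps)
  qed
  then show ?thesis
    using \<open>p \<in> K\<close> p[OF \<open>0 \<in> K\<close>] by auto
qed

section \<open>Open mapping theorem\<close>

lemma surj_imp_closure_image_ball_contains_ball:
  fixes B :: "'a::real_normed_vector \<Rightarrow> 'b::banach"
  assumes "surj B"
  shows "\<exists>n r y0. 0 < r \<and> ball y0 r \<subseteq> closure (B ` ball 0 (real n))"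
proof (rule ccontr)
  assume no_ball: "\<not> ?thesis"
  define \<G> where "\<G> = range (\<lambda>n::nat. closure (B ` ball 0 (real n)))"
  have "euclidean interior_of \<Union>\<G> = {}"
  proof (rule Baire_category_alt)
    show "completely_metrizable_space (euclidean :: 'b topology) \<or>
        locally_compact_space (euclidean :: 'b topology) \<and> regular_space (euclidean :: 'b topology)"
      using completely_metrizable_space_euclidean by blast
    show "countable \<G>"
      by (simp add: \<G>_def)
    fix T
    assume "T \<in> \<G>"
    then obtain n where T: "T = closure (B ` ball 0 (real n))"
      by (auto simp: \<G>_def)
    have "interior T = {}"
    proof (rule ccontr)
      assume "interior T \<noteq> {}"
      then obtain y0 r where "0 < r" "ball y0 r \<subseteq> interior T"
        by (metis all_not_in_conv open_contains_ball open_interior)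
      then show False
        using no_ball T interior_subset by blast
    qed
    then show "closedin euclidean T \<and> euclidean interior_of T = {}"
      by (simp add: T)
  qed
  moreover have "\<Union>\<G> = UNIV"
  proof -
    have "B x \<in> \<Union>\<G>" for x
    proof -
      obtain n :: nat where "norm x < n"
        using reals_Archimedean2 by blast
      then have "B x \<in> closure (B ` ball 0 (real n))"
        by (intro subsetD[OF closure_subset] imageI) simp
      then show ?thesis
        by (auto simp: \<G>_def)
    qed
    then show ?thesis
      using assms by (metis UNIV_eq_I surjD)
  qed
  ultimately show False
    by simp
qed

lemma closure_image_ball_contains_ball_imp_approximate_preimage:
  fixes B :: "'a::real_normed_vector \<Rightarrow> 'b::real_normed_vector"
  assumes lin: "linear B" and ball: "ball y0 r \<subseteq> closure (B ` ball 0 (real n))"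
    and "norm y < r" "0 < e"
  shows "\<exists>x. norm x < 2 * n \<and> norm (B x - y) < e"
proof -
  have approx: "\<exists>a. norm a < n \<and> norm (B a - z) < e / 2" if "z \<in> ball y0 r" for z
  proof -
    have "\<forall>\<epsilon>>0. \<exists>a\<in>ball 0 (real n). dist (B a) z < \<epsilon>"
      using subsetD[OF ball that] by (simp add: closure_approachable)
    then show ?thesis
      using \<open>0 < e\<close> half_gt_zero by (fastforce simp: dist_norm)
  qed
  \<comment> \<open>approximating both \<open>y0 + y\<close> and the centre \<open>y0\<close> turns the ball around \<open>y0\<close> into one around \<open>0\<close>\<close>
  have "0 < r"
    using assms(3) norm_ge_zero[of y] by linarith
  then have "y0 + y \<in> ball y0 r" "y0 \<in> ball y0 r"
    using assms(3) by (simp_all add: dist_norm)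
  then obtain a b where a: "norm a < n" "norm (B a - (y0 + y)) < e / 2"
    and b: "norm b < n" "norm (B b - y0) < e / 2"
    using approx by metis
  have "B (a - b) - y = (B a - (y0 + y)) - (B b - y0)"
    by (simp add: linear_diff[OF lin] algebra_simps)
  then have "norm (B (a - b) - y) \<le> norm (B a - (y0 + y)) + norm (B b - y0)"
    by (metis norm_triangle_ineq4)
  then have "norm (B (a - b) - y) < e"
    using a(2) b(2) by linarith
  moreover have "norm (a - b) < 2 * n"
    using a(1) b(1) norm_triangle_ineq4[of a b] by simp
  ultimately show ?thesis
    by blast
qed

lemma surj_imp_half_approximate_preimage:
  fixes B :: "'a::real_normed_vector \<Rightarrow> 'b::banach"
  assumes lin: "linear B" and "surj B"
  shows "\<exists>M\<ge>0. \<forall>y. \<exists>x. norm x \<le> M * norm y \<and> norm (B x - y) \<le> norm y / 2"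
proof -
  obtain n r y0 where "0 < r" and ball: "ball y0 r \<subseteq> closure (B ` ball 0 (real n))"
    using surj_imp_closure_image_ball_contains_ball[OF assms(2)] by blast
  have small: "\<exists>x. norm x < 2 * n \<and> norm (B x - y) < e" if "norm y < r" "0 < e" for y e
    using closure_image_ball_contains_ball_imp_approximate_preimage[OF lin ball that] .
  define M where "M = 4 * n / r"
  have "\<exists>x. norm x \<le> M * norm y \<and> norm (B x - y) \<le> norm y / 2" for y
  proof (cases "y = 0")
    case True
    then show ?thesis
      by (intro exI[of _ 0]) (simp add: linear_0[OF lin])
  next
    case False
    define t where "t = r / (2 * norm y)"
    have "0 < t"
      using False \<open>0 < r\<close> by (simp add: t_def)
    have "norm (scaleR t y) < r"
      using False \<open>0 < r\<close> by (simp add: t_def)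
    then obtain x where x: "norm x < 2 * n" "norm (B x - scaleR t y) < t * (norm y / 2)"
      using small[of "scaleR t y" "t * (norm y / 2)"] \<open>0 < t\<close> False by auto
    have "B (scaleR (1 / t) x) - y = scaleR (1 / t) (B x - scaleR t y)"
      using \<open>0 < t\<close> by (simp add: linear_scale[OF lin] algebra_simps)
    then have "norm (B (scaleR (1 / t) x) - y) \<le> norm y / 2"
      using x(2) \<open>0 < t\<close> by (simp add: divide_le_eq less_imp_le mult.commute)
    moreover have "norm (scaleR (1 / t) x) \<le> M * norm y"
      using x(1) \<open>0 < t\<close> False \<open>0 < r\<close> by (simp add: M_def t_def field_simps)
    ultimately show ?thesis
      by blast
  qed
  moreover have "0 \<le> M"
    using \<open>0 < r\<close> by (simp add: M_def)
  ultimately show ?thesis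
    by blast
qed

lemma sums_if_residuals_tendsto_zero:
  fixes r u :: "nat \<Rightarrow> 'a::real_normed_vector"
  assumes "\<And>n. r (Suc n) = r n - u n" "r \<longlonglongrightarrow> 0"
  shows "u sums r 0"
proof -
  have "(\<Sum>k<n. u k) = r 0 - r n" for n
    using sum_lessThan_telescope'[of r n] assms(1) by simp
  then show ?thesis
    unfolding sums_def using tendsto_diff[OF tendsto_const assms(2), of "r 0"] by simp
qed

lemma half_approximate_preimage_imp_preimage:
  fixes B :: "'a::banach \<Rightarrow> 'b::real_normed_vector"
  assumes lin: "bounded_linear B" and "0 \<le> M"
    and approx: "\<And>y. \<exists>x. norm x \<le> M * norm y \<and> norm (B x - y) \<le> norm y / 2"
  shows "\<exists>x. B x = y \<and> norm x \<le> 2 * M * norm y"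
proof -
  interpret bounded_linear B
    by (rule lin)
  obtain f where f: "\<And>z. norm (f z) \<le> M * norm z \<and> norm (B (f z) - z) \<le> norm z / 2"
    using approx by metis
  define ys where "ys = rec_nat y (\<lambda>_ z. z - B (f z))"
  have ys_Suc: "ys (Suc n) = ys n - B (f (ys n))" for n
    by (simp add: ys_def)
  have ys_bound: "norm (ys n) \<le> norm y / 2 ^ n" for n
  proof (induction n)
    case 0
    then show ?case
      by (simp add: ys_def)
  next
    case (Suc n)
    have "norm (ys (Suc n)) \<le> norm (ys n) / 2"
      using f[of "ys n"] by (simp add: ys_Suc norm_minus_commute)
    also have "\<dots> \<le> norm y / 2 ^ n / 2"
      using Suc.IH by (rule divide_right_mono) simp
    finally show ?case
      by simp
  qed
  define xs where "xs n = f (ys n)" for n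
  have xs_bound: "norm (xs n) \<le> M * norm y * (1 / 2) ^ n" for n
    using f[of "ys n"] mult_left_mono[OF ys_bound[of n] \<open>0 \<le> M\<close>]
    by (simp add: xs_def power_one_over)
  have summable_bound: "summable (\<lambda>n. M * norm y * (1 / 2) ^ n)"
    by (intro summable_mult summable_geometric) simp
  have "summable xs"
    by (rule summable_comparison_test'[OF summable_bound xs_bound])
  then have "(\<lambda>n. B (xs n)) sums B (suminf xs)"
    by (intro sums summable_sums)
  moreover have "(\<lambda>n. B (xs n)) sums y"
  proof -
    have "ys \<longlonglongrightarrow> 0"
      by (rule Lim_null_comparison[OF always_eventually[OF allI[OF ys_bound]]])
        (simp add: LIMSEQ_divide_realpow_zero)
    then show ?thesis
      using sums_if_residuals_tendsto_zero[of ys "\<lambda>n. B (xs n)"]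
      by (simp add: xs_def ys_Suc ys_def)
  qed
  ultimately have "B (suminf xs) = y"
    by (rule sums_unique2)
  moreover have "norm (suminf xs) \<le> 2 * M * norm y"
    using norm_suminf_le[OF xs_bound summable_bound]
    by (simp add: suminf_mult suminf_geometric)
  ultimately show ?thesis
    by blast
qed

theorem open_mapping_bounded_preimage:
  fixes B :: "'a::banach \<Rightarrow> 'b::banach"
  assumes "bounded_linear B" "surj B"
  shows "\<exists>C\<ge>0. \<forall>y. \<exists>x. B x = y \<and> norm x \<le> C * norm y"
proof -
  obtain M where "0 \<le> M" "\<And>y. \<exists>x. norm x \<le> M * norm y \<and> norm (B x - y) \<le> norm y / 2"
    using surj_imp_half_approximate_preimage[OF bounded_linear.linear[OF assms(1)] assms(2)]
    by blast
  then show ?thesis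
    using half_approximate_preimage_imp_preimage[OF assms(1)] by (intro exI[of _ "2 * M"]) auto
qed

section \<open>Douglas solutions and surjectivity\<close>

lemma bounded_op_imp_bounded_linear: "bounded_op T \<Longrightarrow> bounded_linear T"
  unfolding bounded_op_def by (auto intro!: bounded_linear_intro simp: scaleR_scaleC)

lemma id_in_BH: "(\<lambda>x. x) \<in> BH"
  unfolding BH_def bounded_op_def by (auto intro: exI[of _ 1])

lemma comp_in_BH:
  assumes "S \<in> BH" "T \<in> BH"
  shows "S \<circ> T \<in> BH"
proof -
  have "bounded_linear (\<lambda>x. S (T x))"
    using assms unfolding BH_def by (simp add: bounded_linear_compose bounded_op_imp_bounded_linear)
  then obtain K where "\<And>x. norm (S (T x)) \<le> norm x * K"
    using bounded_linear.bounded by blast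
  then show ?thesis
    using assms by (auto simp: BH_def bounded_op_def)
qed

lemma csubspace_ker_op:
  assumes "bounded_op T"
  shows "csubspace (ker_op T)"
proof -
  interpret bounded_linear T
    by (rule bounded_op_imp_bounded_linear[OF assms])
  show ?thesis
    using assms by (simp add: csubspace_def ker_op_def bounded_op_def)
qed

lemma closed_ker_op: "bounded_op T \<Longrightarrow> closed (ker_op T)"
  unfolding ker_op_def vimage_def[symmetric, of T "{0}", simplified]
  by (intro closed_vimage closed_singleton linear_continuous_on bounded_op_imp_bounded_linear)

lemma surj_imp_bounded_preimage_in_orth_ker:
  fixes B :: "'a::complex_hilbert \<Rightarrow> 'a"
  assumes B: "bounded_op B" and "surj B"
  shows "\<exists>C. \<forall>y. \<exists>q. q \<in> orth_compl (ker_op B) \<and> B q = y \<and> norm q \<le> C * norm y"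
proof -
  interpret bounded_linear B
    by (rule bounded_op_imp_bounded_linear[OF B])
  obtain C where C: "\<And>y. \<exists>x. B x = y \<and> norm x \<le> C * norm y"
    using open_mapping_bounded_preimage[OF bounded_linear_axioms assms(2)] by blast
  have "\<exists>q. q \<in> orth_compl (ker_op B) \<and> B q = y \<and> norm q \<le> C * norm y" for y
  proof -
    obtain x where x: "B x = y" "norm x \<le> C * norm y"
      using C by blast
    obtain p where "p \<in> ker_op B" "x - p \<in> orth_compl (ker_op B)" "norm (x - p) \<le> norm x"
      using orthogonal_decomposition[OF closed_ker_op[OF B] csubspace_ker_op[OF B]] by blast
    then show ?thesis
      using x by (intro exI[of _ "x - p"]) (auto simp: diff ker_op_def)
  qed
  then show ?thesis
    by blast
qed

lemma surj_imp_right_inverse_into_orth_ker: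
  fixes B :: "'a::complex_hilbert \<Rightarrow> 'a"
  assumes "B \<in> BH" "surj B"
  shows "\<exists>R\<in>BH. (\<forall>y. B (R y) = y) \<and> range R \<subseteq> orth_compl (ker_op B)"
proof -
  have B: "bounded_op B"
    using assms(1) by (simp add: BH_def)
  define K where "K = ker_op B"
  obtain R C where R: "\<And>y. R y \<in> orth_compl K \<and> B (R y) = y \<and> norm (R y) \<le> C * norm y"
    using surj_imp_bounded_preimage_in_orth_ker[OF B assms(2)] unfolding K_def by metis
  \<comment> \<open>\<open>B\<close> is injective on \<open>orth_compl K\<close>, which forces \<open>R\<close> to be linear\<close>
  have R_unique: "R y = q" if "q \<in> orth_compl K" "B q = y" for q y
  proof -
    have "R y - q \<in> K"
      using R[of y] that(2) linear_diff[OF bounded_linear.linear[OF bounded_op_imp_bounded_linear[OF B]]]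
      by (simp add: K_def ker_op_def)
    moreover have "R y - q \<in> orth_compl K"
      using R[of y] that(1) by (simp add: orth_compl_diff)
    ultimately show ?thesis
      using orth_compl_inter_eq_zero by fastforce
  qed
  have "bounded_op R"
    unfolding bounded_op_def
  proof (intro conjI allI exI)
    fix a b
    show "R (a + b) = R a + R b"
      using R[of a] R[of b] csubspace_orth_compl[of K] B
      by (intro R_unique) (auto simp: csubspace_def bounded_op_def)
  next
    fix c a
    show "R (scaleC c a) = scaleC c (R a)"
      using R[of a] csubspace_orth_compl[of K] B
      by (intro R_unique) (auto simp: csubspace_def bounded_op_def)
  next
    fix y
    show "norm (R y) \<le> norm y * C"
      using R[of y] by (simp add: mult.commute)
  qed
  then show ?thesis
    using R by (auto simp: BH_def K_def)
qed

lemma surj_imp_douglas_solvable: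
  assumes "B \<in> BH" "surj B" "A \<in> BH"
  shows "\<exists>X. douglas_solution A B X"
proof -
  obtain R where "R \<in> BH" "\<And>y. B (R y) = y" "range R \<subseteq> orth_compl (ker_op B)"
    using surj_imp_right_inverse_into_orth_ker[OF assms(1,2)] by blast
  then have "douglas_solution A B (R \<circ> A)"
    using assms comp_in_BH[of R A] by (auto simp: douglas_solution_def)
  then show ?thesis
    by blast
qed

lemma surj_iff_douglas_solvable:
  assumes "B \<in> BH"
  shows "range B = UNIV \<longleftrightarrow> (\<forall>A\<in>BH. \<exists>X. douglas_solution A B X)"
proof
  assume "range B = UNIV"
  then show "\<forall>A\<in>BH. \<exists>X. douglas_solution A B X"
    using surj_imp_douglas_solvable[OF assms] by blast
next
  assume "\<forall>A\<in>BH. \<exists>X. douglas_solution A B X"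
  then obtain X where "douglas_solution (\<lambda>x. x) B X"
    using id_in_BH by blast
  then show "range B = UNIV"
    by (auto simp: douglas_solution_def)
qed

lemma douglas_solvable_preserved:
  assumes bij: "bij_betw \<phi> BH BH" and pres: "preserves_douglas_both \<phi>"
    and "A \<in> BH" "B \<in> BH"
  shows "(\<exists>X. douglas_solution A B X) \<longleftrightarrow> (\<exists>Y. douglas_solution (\<phi> A) (\<phi> B) Y)"
proof
  assume "\<exists>X. douglas_solution A B X"
  then obtain X where "X \<in> BH" "douglas_solution A B X"
    by (auto simp: douglas_solution_def)
  then show "\<exists>Y. douglas_solution (\<phi> A) (\<phi> B) Y"
    using pres assms(3,4) unfolding preserves_douglas_both_def by blast
next
  assume "\<exists>Y. douglas_solution (\<phi> A) (\<phi> B) Y"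
  then obtain Y where "Y \<in> BH" "douglas_solution (\<phi> A) (\<phi> B) Y"
    by (auto simp: douglas_solution_def)
  moreover obtain X where "X \<in> BH" "Y = \<phi> X"
    using bij \<open>Y \<in> BH\<close> by (auto simp: bij_betw_def)
  ultimately show "\<exists>X. douglas_solution A B X"
    using pres assms(3,4) unfolding preserves_douglas_both_def by blast
qed

theorem claim1:
  fixes \<phi> :: "('a::complex_hilbert \<Rightarrow> 'a) \<Rightarrow> ('a \<Rightarrow> 'a)"
  assumes "\<not> fin_dim_C TYPE('a)"
    and "bij_betw \<phi> BH BH"
    and "preserves_douglas_both \<phi>"
    and "B \<in> BH"
  shows "range B = UNIV \<longleftrightarrow> range (\<phi> B) = UNIV"
proof -
  have "\<phi> B \<in> BH" and image: "\<phi> ` BH = BH"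
    using assms(2,4) by (auto simp: bij_betw_def)
  have "range B = UNIV \<longleftrightarrow> (\<forall>A\<in>BH. \<exists>X. douglas_solution A B X)"
    by (rule surj_iff_douglas_solvable[OF assms(4)])
  also have "\<dots> \<longleftrightarrow> (\<forall>A\<in>BH. \<exists>Y. douglas_solution (\<phi> A) (\<phi> B) Y)"
    using douglas_solvable_preserved[OF assms(2,3) _ assms(4)] by blast
  also have "\<dots> \<longleftrightarrow> (\<forall>A'\<in>\<phi> ` BH. \<exists>Y. douglas_solution A' (\<phi> B) Y)"
    by blast
  also have "\<dots> \<longleftrightarrow> range (\<phi> B) = UNIV"
    unfolding image by (rule surj_iff_douglas_solvable[OF \<open>\<phi> B \<in> BH\<close>, symmetric])
  finally show ?thesis .
qed

end
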